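(* Let $ABC$ be a triangle and let $P$ be a point. Let $H_A, H_B, H_C$ be the orthocenters of the triangles $BPC$, $CPA$, $PAB$ respectively, and let $\triangle_A, \triangle_B, \triangle_C$ denote the triangles $AH_BH_C$, $BH_CH_A$, $CH_AH_B$ respectively. Then $\triangle_A, \triangle_B, \triangle_C$ have a common orthocenter.
   Context: All triangles involved are assumed nondegenerate so that their orthocenters are defined. *)

theory Defs
  imports "HOL-Analysis.Analysis"
begin

definition nondegenerate_triangle :: "real^2 \<Rightarrow> real^2 \<Rightarrow> real^2 \<Rightarrow> bool" where
  "nondegenerate_triangle X Y Z \<longleftrightarrow> \<not> collinear {X, Y, Z}"

definition is_orthocenter :: "real^2 \<Rightarrow> real^2 \<Rightarrow> real^2 \<Rightarrow> real^2 \<Rightarrow> bool" where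
  "is_orthocenter H X Y Z \<longleftrightarrow>
     (H - X) \<bullet> (Y - Z) = 0 \<and> (H - Y) \<bullet> (Z - X) = 0 \<and> (H - Z) \<bullet> (X - Y) = 0"

definition orthocenter :: "real^2 \<Rightarrow> real^2 \<Rightarrow> real^2 \<Rightarrow> real^2" where
  "orthocenter X Y Z = (THE H. is_orthocenter H X Y Z)"

end

theory Submission
  imports Defs
begin

text \<open>Put P at the origin and write \<open>\<ell>\<^sub>X\<close> for the line through \<open>H\<^sub>X\<close> parallel to PX.
  In the triangle \<open>A H\<^sub>B H\<^sub>C\<close> the altitude from \<open>H\<^sub>B\<close> is perpendicular to \<open>AH\<^sub>C\<close>, which is
  itself perpendicular to PB; so this altitude is \<open>\<ell>\<^sub>B\<close>, and likewise the altitude from \<open>H\<^sub>C\<close>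
  is \<open>\<ell>\<^sub>C\<close>. Hence each of the three orthocenters is the intersection of two of the lines
  \<open>\<ell>\<^sub>A, \<ell>\<^sub>B, \<ell>\<^sub>C\<close>, and it suffices that these lines are concurrent. Writing \<open>\<ell>\<^sub>X\<close> as
  \<open>q \<times> x = H\<^sub>X \<times> x\<close> with \<open>\<times>\<close> the planar cross product, concurrency amounts to
  \<open>(b \<times> c)(H\<^sub>A \<times> a) + (c \<times> a)(H\<^sub>B \<times> b) + (a \<times> b)(H\<^sub>C \<times> c) = 0\<close>, and
  \<open>(b \<times> c)(H\<^sub>A \<times> a) = (b \<cdot> c)(a \<cdot> (c - b))\<close>, whose cyclic sum vanishes.\<close>

definition cross2 :: "real^2 \<Rightarrow> real^2 \<Rightarrow> real" where
  "cross2 x y = x$1 * y$2 - x$2 * y$1"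

lemma inner_real2: "(x::real^2) \<bullet> y = x$1 * y$1 + x$2 * y$2"
  by (simp add: inner_vec_def sum_2)

lemma vec2_eqI: "(x::real^2)$1 = y$1 \<Longrightarrow> x$2 = y$2 \<Longrightarrow> x = y"
  by (simp add: vec_eq_iff forall_2)

lemma cross2_diff_left: "cross2 (x - y) w = cross2 x w - cross2 y w"
  by (simp add: cross2_def algebra_simps)

lemma cross2_cyclic_sum:
  "cross2 b c * cross2 q a + cross2 c a * cross2 q b + cross2 a b * cross2 q c = 0"
  by (simp add: cross2_def algebra_simps)

lemma collinear_if_cross2_eq_0:
  assumes "cross2 (Y - X) (Z - X) = 0"
  shows "collinear {X, Y, Z}"
proof -
  define u v where "u = Y - X" and "v = Z - X"
  have uv: "u$1 * v$2 = u$2 * v$1"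
    using assms by (simp add: cross2_def u_def v_def)
  have "u = 0 \<or> (\<exists>c. v = c *\<^sub>R u)"
  proof (cases "u$1 = 0")
    case True
    show ?thesis
    proof (cases "u$2 = 0")
      case False
      with True uv have "v = (v$2 / u$2) *\<^sub>R u"
        by (intro vec2_eqI) auto
      then show ?thesis by blast
    qed (use True in \<open>simp add: vec2_eqI\<close>)
  next
    case False
    with uv have "v = (v$1 / u$1) *\<^sub>R u"
      by (intro vec2_eqI) (auto simp: field_simps)
    then show ?thesis by blast
  qed
  then have "collinear {0, u, v}"
    by (auto simp: collinear_lemma)
  moreover have "{X, Y, Z} = {Y, X, Z}"
    by auto
  ultimately show ?thesis
    by (simp add: collinear_3 u_def v_def)
qed

lemma nondegenerate_triangle_cross2:
  "nondegenerate_triangle X Y Z \<Longrightarrow> cross2 (Y - X) (Z - X) \<noteq> 0"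
  using collinear_if_cross2_eq_0 nondegenerate_triangle_def by blast

lemma nondegenerate_triangle_swap:
  "nondegenerate_triangle X Y Z \<Longrightarrow> nondegenerate_triangle Y X Z"
  by (simp add: nondegenerate_triangle_def insert_commute)

lemma nondegenerate_triangle_distinct:
  "nondegenerate_triangle X Y Z \<Longrightarrow> X \<noteq> Y \<and> Y \<noteq> Z \<and> X \<noteq> Z"
  unfolding nondegenerate_triangle_def
  by (metis collinear_2 insert_absorb2 insert_commute)

lemma exists_inner_eq_pair:
  assumes "cross2 u v \<noteq> 0"
  shows "\<exists>h. h \<bullet> u = r \<and> h \<bullet> v = s"
proof -
  define h :: "real^2" where
    "h = vector [(r * v$2 - s * u$2) / cross2 u v, (s * u$1 - r * v$1) / cross2 u v]"
  have h1: "h$1 * cross2 u v = r * v$2 - s * u$2" and h2: "h$2 * cross2 u v = s * u$1 - r * v$1"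
    using assms by (simp_all add: h_def)
  have "(h \<bullet> u) * cross2 u v = r * cross2 u v" "(h \<bullet> v) * cross2 u v = s * cross2 u v"
    using h1 h2 unfolding inner_real2 cross2_def by algebra+
  with assms show ?thesis by auto
qed

lemma eq_0_if_orthogonal_independent:
  assumes "d \<bullet> u = 0" "d \<bullet> v = 0" "cross2 u v \<noteq> 0"
  shows "d = 0"
proof -
  have "d$1 * cross2 u v = 0" "d$2 * cross2 u v = 0"
    using assms(1,2) unfolding inner_real2 cross2_def by algebra+
  with assms(3) show ?thesis by (intro vec2_eqI) auto
qed

lemma eq_0_if_parallel_independent:
  assumes "cross2 d u = 0" "cross2 d v = 0" "cross2 u v \<noteq> 0"
  shows "d = 0"
proof -
  have "d$1 * cross2 u v = 0" "d$2 * cross2 u v = 0"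
    using assms(1,2) unfolding cross2_def by algebra+
  with assms(3) show ?thesis by (intro vec2_eqI) auto
qed

lemma cross2_eq_0_if_common_normal:
  assumes "u \<bullet> w = 0" "v \<bullet> w = 0" "w \<noteq> 0"
  shows "cross2 u v = 0"
proof -
  have "w$1 * cross2 u v = 0" "w$2 * cross2 u v = 0"
    using assms(1,2) unfolding inner_real2 cross2_def by algebra+
  moreover have "w$1 \<noteq> 0 \<or> w$2 \<noteq> 0"
    using assms(3) by (metis vec2_eqI zero_index)
  ultimately show ?thesis by auto
qed

lemma is_orthocenter_swap12:
  "is_orthocenter H X Y Z \<Longrightarrow> is_orthocenter H Y X Z"
  unfolding is_orthocenter_def by (simp add: inner_diff_right)

lemma is_orthocenter_swap23:
  "is_orthocenter H X Y Z \<Longrightarrow> is_orthocenter H X Z Y"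
  unfolding is_orthocenter_def by (simp add: inner_diff_right)

lemma is_orthocenter_translate:
  "is_orthocenter H X Y Z \<Longrightarrow> is_orthocenter (H - P) (X - P) (Y - P) (Z - P)"
  unfolding is_orthocenter_def by simp

lemma is_orthocenter_iff_two_altitudes:
  "is_orthocenter H X Y Z \<longleftrightarrow> (H - X) \<bullet> (Y - Z) = 0 \<and> (H - Y) \<bullet> (Z - X) = 0"
proof -
  have "(H - X) \<bullet> (Y - Z) + (H - Y) \<bullet> (Z - X) + (H - Z) \<bullet> (X - Y) = 0"
    by (simp add: inner_diff_left inner_diff_right inner_commute)
  then show ?thesis
    unfolding is_orthocenter_def by linarith
qed

lemma is_orthocenter_unique:
  assumes "nondegenerate_triangle X Y Z" "is_orthocenter H X Y Z" "is_orthocenter H' X Y Z"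
  shows "H = H'"
proof -
  have "cross2 (Y - Z) (Z - X) \<noteq> 0"
    using nondegenerate_triangle_cross2[OF assms(1)] by (simp add: cross2_def algebra_simps)
  moreover have "(H - H') \<bullet> (Y - Z) = 0" "(H - H') \<bullet> (Z - X) = 0"
    using assms(2,3) unfolding is_orthocenter_def by (simp_all add: inner_diff_left)
  ultimately have "H - H' = 0"
    by (rule eq_0_if_orthogonal_independent[rotated 2])
  then show ?thesis by simp
qed

lemma is_orthocenter_orthocenter:
  assumes "nondegenerate_triangle X Y Z"
  shows "is_orthocenter (orthocenter X Y Z) X Y Z"
proof -
  have "cross2 (Y - Z) (Z - X) \<noteq> 0"
    using nondegenerate_triangle_cross2[OF assms] by (simp add: cross2_def algebra_simps)
  then obtain H where "H \<bullet> (Y - Z) = X \<bullet> (Y - Z)" "H \<bullet> (Z - X) = Y \<bullet> (Z - X)"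
    using exists_inner_eq_pair by blast
  then have H: "is_orthocenter H X Y Z"
    by (simp add: is_orthocenter_iff_two_altitudes inner_diff_left)
  show ?thesis
    unfolding orthocenter_def using is_orthocenter_unique[OF assms _ H]
    by (rule theI[where P = "\<lambda>H. is_orthocenter H X Y Z", OF H])
qed

lemma cross2_orthocenter_origin:
  assumes "is_orthocenter h 0 b c"
  shows "cross2 b c * cross2 h a = (b \<bullet> c) * (a \<bullet> (c - b))"
proof -
  have hb: "h \<bullet> b = b \<bullet> c" and hc: "h \<bullet> c = b \<bullet> c"
    using assms unfolding is_orthocenter_def by (simp_all add: inner_diff_left inner_diff_right)
  have h1: "cross2 b c * h$1 = c$2 * (h \<bullet> b) - b$2 * (h \<bullet> c)"
    and h2: "cross2 b c * h$2 = b$1 * (h \<bullet> c) - c$1 * (h \<bullet> b)"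
    by (simp_all add: cross2_def inner_real2 algebra_simps)
  have "cross2 b c * cross2 h a = (cross2 b c * h$1) * a$2 - (cross2 b c * h$2) * a$1"
    by (simp add: cross2_def[of h a] algebra_simps)
  also have "\<dots> = (b \<bullet> c) * (a \<bullet> (c - b))"
    unfolding h1 h2 hb hc by (simp add: inner_real2 algebra_simps)
  finally show ?thesis .
qed

lemma parallels_concurrent_origin:
  assumes "is_orthocenter ha 0 b c" "is_orthocenter hb 0 c a" "is_orthocenter hc 0 a b"
    and "cross2 (q - hb) b = 0" "cross2 (q - hc) c = 0" "cross2 b c \<noteq> 0"
  shows "cross2 (q - ha) a = 0"
proof -
  have "cross2 b c * cross2 ha a + cross2 c a * cross2 hb b + cross2 a b * cross2 hc c = 0"
    unfolding cross2_orthocenter_origin[OF assms(1)] cross2_orthocenter_origin[OF assms(2)]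
      cross2_orthocenter_origin[OF assms(3)]
    by (simp add: inner_commute algebra_simps)
  with cross2_cyclic_sum[of b c q a]
  have "cross2 b c * cross2 (q - ha) a + cross2 c a * cross2 (q - hb) b
      + cross2 a b * cross2 (q - hc) c = 0"
    by (simp add: cross2_diff_left algebra_simps)
  with assms(4-6) show ?thesis by simp
qed

lemma parallels_concurrent:
  assumes "is_orthocenter HA P B C" "is_orthocenter HB P C A" "is_orthocenter HC P A B"
    and "cross2 (Q - HB) (B - P) = 0" "cross2 (Q - HC) (C - P) = 0"
    and "cross2 (B - P) (C - P) \<noteq> 0"
  shows "cross2 (Q - HA) (A - P) = 0"
proof -
  have "cross2 ((Q - P) - (HA - P)) (A - P) = 0"
  proof (rule parallels_concurrent_origin)
    show "is_orthocenter (HA - P) 0 (B - P) (C - P)"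
      using is_orthocenter_translate[OF assms(1), of P] by simp
    show "is_orthocenter (HB - P) 0 (C - P) (A - P)"
      using is_orthocenter_translate[OF assms(2), of P] by simp
    show "is_orthocenter (HC - P) 0 (A - P) (B - P)"
      using is_orthocenter_translate[OF assms(3), of P] by simp
  qed (use assms(4-6) in simp_all)
  then show ?thesis by simp
qed

lemma altitude_parallel:
  assumes "is_orthocenter Q A HB HC" "is_orthocenter HC P A B" "A \<noteq> HC"
  shows "cross2 (Q - HB) (B - P) = 0"
proof (rule cross2_eq_0_if_common_normal)
  show "(Q - HB) \<bullet> (HC - A) = 0"
    using assms(1) by (simp add: is_orthocenter_def)
  show "(B - P) \<bullet> (HC - A) = 0"
    using assms(2) by (simp add: is_orthocenter_def inner_commute)
  show "HC - A \<noteq> 0"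
    using assms(3) by simp
qed

lemma orthocenter_on_parallels:
  assumes "is_orthocenter HA P B C" "is_orthocenter HB P C A" "is_orthocenter HC P A B"
    and "nondegenerate_triangle A HB HC" "cross2 (B - P) (C - P) \<noteq> 0"
  defines "Q \<equiv> orthocenter A HB HC"
  shows "cross2 (Q - HA) (A - P) = 0 \<and> cross2 (Q - HB) (B - P) = 0 \<and> cross2 (Q - HC) (C - P) = 0"
proof -
  have Q: "is_orthocenter Q A HB HC"
    unfolding Q_def using assms(4) by (rule is_orthocenter_orthocenter)
  have "A \<noteq> HB" "A \<noteq> HC"
    using nondegenerate_triangle_distinct[OF assms(4)] by auto
  then have "cross2 (Q - HB) (B - P) = 0" "cross2 (Q - HC) (C - P) = 0"
    using altitude_parallel[OF Q assms(3)]
      altitude_parallel[OF is_orthocenter_swap23[OF Q] is_orthocenter_swap23[OF assms(2)]]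
    by auto
  with parallels_concurrent[OF assms(1-3)] assms(5) show ?thesis by blast
qed

lemma parallels_intersection_unique:
  assumes "cross2 (Q - HA) (A - P) = 0" "cross2 (Q - HB) (B - P) = 0"
    and "cross2 (R - HA) (A - P) = 0" "cross2 (R - HB) (B - P) = 0"
    and "cross2 (A - P) (B - P) \<noteq> 0"
  shows "Q = R"
proof -
  have "cross2 (Q - R) (A - P) = 0"
    using assms(1,3) cross2_diff_left[of "Q - HA" "R - HA" "A - P"] by simp
  moreover have "cross2 (Q - R) (B - P) = 0"
    using assms(2,4) cross2_diff_left[of "Q - HB" "R - HB" "B - P"] by simp
  ultimately have "Q - R = 0"
    using assms(5) by (rule eq_0_if_parallel_independent)
  then show ?thesis by simp
qed

theorem proposition2p1:
  fixes A B C P :: "real^2"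
  defines "HA \<equiv> orthocenter B P C"
      and "HB \<equiv> orthocenter C P A"
      and "HC \<equiv> orthocenter P A B"
  assumes "nondegenerate_triangle A B C"
      and "nondegenerate_triangle B P C"
      and "nondegenerate_triangle C P A"
      and "nondegenerate_triangle P A B"
      and "nondegenerate_triangle A HB HC"
      and "nondegenerate_triangle B HC HA"
      and "nondegenerate_triangle C HA HB"
  shows "orthocenter A HB HC = orthocenter B HC HA
       \<and> orthocenter B HC HA = orthocenter C HA HB"
proof -
  have oA: "is_orthocenter HA P B C"
    unfolding HA_def using assms(5) is_orthocenter_orthocenter is_orthocenter_swap12 by blast
  have oB: "is_orthocenter HB P C A"
    unfolding HB_def using assms(6) is_orthocenter_orthocenter is_orthocenter_swap12 by blast
  have oC: "is_orthocenter HC P A B"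
    unfolding HC_def using assms(7) is_orthocenter_orthocenter by blast
  have BC: "cross2 (B - P) (C - P) \<noteq> 0" and CA: "cross2 (C - P) (A - P) \<noteq> 0"
    and AB: "cross2 (A - P) (B - P) \<noteq> 0"
    using assms(5-7) nondegenerate_triangle_cross2 nondegenerate_triangle_swap by blast+
  note QA = orthocenter_on_parallels[OF oA oB oC assms(8) BC]
  note QB = orthocenter_on_parallels[OF oB oC oA assms(9) CA]
  note QC = orthocenter_on_parallels[OF oC oA oB assms(10) AB]
  have "orthocenter A HB HC = orthocenter B HC HA"
    using QA QB by (intro parallels_intersection_unique[OF _ _ _ _ AB]) auto
  moreover have "orthocenter B HC HA = orthocenter C HA HB"
    using QB QC by (intro parallels_intersection_unique[OF _ _ _ _ AB]) auto
  ultimately show ?thesis ..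
qed

end
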